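(* Let $K$ be a field with a derivation $\partial$, and let $K[D]$ be the ring of ordinary linear differential operators over $K$ ($D\circ a=aD+\partial(a)$ for $a\in K$). Let $L\in K[D]$ have symbol $\operatorname{Sym}_L=S_1S_2$, where $S_1,S_2\in K[X]$ are homogeneous of degrees $d_1,d_2$. Then every partial factorization of $L$ of order $\max(d_1,d_2)-1$ and type $(S_1)(S_2)$ has at most one extension to a factorization $L=F_1'\circ F_2'$ of type $(S_1)(S_2)$.
   Context: For $L=\sum_{j\le d}a_jD^j$ with $a_j\in K$ and $a_d\neq0$, $\operatorname{ord}(L)=d$ (with $\operatorname{ord}(0)=-\infty$) and $\operatorname{Sym}_L=a_dX^d$. A factorization of type $(S_1)(S_2)$ is $L=F_1\circ F_2$ with $\operatorname{Sym}_{F_i}=S_i$. For $t\in\{0,\dots,\operatorname{ord}L\}$, a partial factorization of order $t$ and type $(S_1)(S_2)$ is a composition $F_1\circ F_2$ with $\operatorname{Sym}_{F_i}=S_i$ and $\operatorname{ord}(L-F_1\circ F_2)<t$. A partial factorization $F_1'\circ F_2'$ of order $t'<t$ is an extension of one $F_1\circ F_2$ of order $t$ if $\operatorname{ord}(F_i-F_i')<t-(d-d_i)$ for $i=1,2$, where $d=\operatorname{ord}L$. A factorization is a partial factorization of order $0$. *)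

theory Defs
  imports "HOL-Computational_Algebra.Polynomial" "HOL-Library.Extended_Real"
begin

definition is_derivation :: "('a::field \<Rightarrow> 'a) \<Rightarrow> bool" where
  "is_derivation \<delta> \<longleftrightarrow> (\<forall>a b. \<delta> (a + b) = \<delta> a + \<delta> b \<and> \<delta> (a * b) = a * \<delta> b + \<delta> a * b)"

text \<open>A differential operator \<open>L = \<Sum>j a_j D^j\<close> is represented by the polynomial with
  coefficients \<open>a_j\<close> (i.e. \<open>coeff L j = a_j\<close>). Composition in \<open>K[D]\<close> is given by the Leibniz
  rule \<open>(a D^i) \<circ> (b D^j) = \<Sum>k\<le>i. a (i choose k) \<delta>^k(b) D^(i-k+j)\<close>, which is the
  unique extension of \<open>D \<circ> a = a D + \<delta>(a)\<close>.\<close>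
definition dcomp :: "('a::field \<Rightarrow> 'a) \<Rightarrow> 'a poly \<Rightarrow> 'a poly \<Rightarrow> 'a poly" where
  "dcomp \<delta> F G = (\<Sum>i\<le>degree F. \<Sum>j\<le>degree G. \<Sum>k\<le>i.
      monom (coeff F i * of_nat (i choose k) * (\<delta> ^^ k) (coeff G j)) (i - k + j))"

definition dord :: "'a::zero poly \<Rightarrow> ereal" where
  "dord P = (if P = 0 then -\<infinity> else ereal (real (degree P)))"

definition Sym :: "'a::zero poly \<Rightarrow> 'a poly" where
  "Sym L = monom (lead_coeff L) (degree L)"

definition homogeneous :: "'a::zero poly \<Rightarrow> nat \<Rightarrow> bool" where
  "homogeneous S d \<longleftrightarrow> (\<exists>c. S = monom c d)"

definition partial_fact ::
  "('a::field \<Rightarrow> 'a) \<Rightarrow> 'a poly \<Rightarrow> int \<Rightarrow> 'a poly \<Rightarrow> 'a poly \<Rightarrow> 'a poly \<Rightarrow> 'a poly \<Rightarrow> bool" where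
  "partial_fact \<delta> L t S1 S2 F1 F2 \<longleftrightarrow>
     0 \<le> t \<and> t \<le> int (degree L) \<and> Sym F1 = S1 \<and> Sym F2 = S2 \<and>
     dord (L - dcomp \<delta> F1 F2) < ereal (real_of_int t)"

definition is_extension ::
  "('a::field \<Rightarrow> 'a) \<Rightarrow> 'a poly \<Rightarrow> 'a poly \<Rightarrow> 'a poly \<Rightarrow> int \<Rightarrow> 'a poly \<Rightarrow> 'a poly
     \<Rightarrow> int \<Rightarrow> 'a poly \<Rightarrow> 'a poly \<Rightarrow> bool" where
  "is_extension \<delta> L S1 S2 t F1 F2 t' F1' F2' \<longleftrightarrow>
     partial_fact \<delta> L t S1 S2 F1 F2 \<and> partial_fact \<delta> L t' S1 S2 F1' F2' \<and> t' < t \<and>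
     dord (F1 - F1') < ereal (real_of_int (t - (int (degree L) - int (degree F1)))) \<and>
     dord (F2 - F2') < ereal (real_of_int (t - (int (degree L) - int (degree F2))))"

end

theory Submission
  imports Defs
begin

text \<open>Let \<open>d\<^sub>2 \<le> d\<^sub>1\<close>. For an extension \<open>F\<^sub>1' \<circ> F\<^sub>2'\<close> of order \<open>0\<close> the bound
  \<open>ord (F\<^sub>2 - F\<^sub>2') < t - (d - d\<^sub>2) = max d\<^sub>1 d\<^sub>2 - 1 - d\<^sub>1 < 0\<close> forces \<open>F\<^sub>2' = F\<^sub>2\<close>.
  Two such factorizations therefore give \<open>F\<^sub>1' \<circ> F\<^sub>2 = L = F\<^sub>1'' \<circ> F\<^sub>2\<close>, and since
  \<open>K[D]\<close> has no zero divisors and composition is additive, \<open>F\<^sub>1' = F\<^sub>1''\<close>.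
  The case \<open>d\<^sub>1 < d\<^sub>2\<close> is symmetric, cancelling on the left.\<close>

lemma derivation_0: "is_derivation \<delta> \<Longrightarrow> \<delta> 0 = 0"
  unfolding is_derivation_def by (metis add_0 add_cancel_right_right)

lemma derivation_diff: "is_derivation \<delta> \<Longrightarrow> \<delta> (a - b) = \<delta> a - \<delta> b"
  unfolding is_derivation_def by (metis add_diff_cancel eq_diff_eq)

lemma funpow_derivation_0: "is_derivation \<delta> \<Longrightarrow> (\<delta> ^^ k) 0 = 0"
  by (induction k) (auto simp: derivation_0)

lemma funpow_derivation_diff:
  "is_derivation \<delta> \<Longrightarrow> (\<delta> ^^ k) (a - b) = (\<delta> ^^ k) a - (\<delta> ^^ k) b"
  by (induction k) (auto simp: derivation_diff)

lemma dcomp_eq_bounded_sum: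
  assumes "is_derivation \<delta>" and "degree F \<le> N" and "degree G \<le> M"
  shows "dcomp \<delta> F G = (\<Sum>i\<le>N. \<Sum>j\<le>M. \<Sum>k\<le>i.
      monom (coeff F i * of_nat (i choose k) * (\<delta> ^^ k) (coeff G j)) (i - k + j))"
proof -
  have "dcomp \<delta> F G = (\<Sum>i\<le>degree F. \<Sum>j\<le>M. \<Sum>k\<le>i.
      monom (coeff F i * of_nat (i choose k) * (\<delta> ^^ k) (coeff G j)) (i - k + j))"
    unfolding dcomp_def
    by (intro sum.cong refl sum.mono_neutral_left)
       (use assms in \<open>auto simp: coeff_eq_0 funpow_derivation_0\<close>)
  also have "\<dots> = (\<Sum>i\<le>N. \<Sum>j\<le>M. \<Sum>k\<le>i.
      monom (coeff F i * of_nat (i choose k) * (\<delta> ^^ k) (coeff G j)) (i - k + j))"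
    by (rule sum.mono_neutral_left) (use assms in \<open>auto simp: coeff_eq_0\<close>)
  finally show ?thesis .
qed

lemma dcomp_diff_left:
  assumes "is_derivation \<delta>"
  shows "dcomp \<delta> (F - G) H = dcomp \<delta> F H - dcomp \<delta> G H"
proof -
  let ?N = "max (degree F) (degree G)"
  have "degree (F - G) \<le> ?N"
    by (simp add: degree_diff_le)
  then show ?thesis
    using dcomp_eq_bounded_sum[OF assms, of _ ?N H "degree H"]
    by (simp add: sum_subtractf[symmetric] diff_monom algebra_simps)
qed

lemma dcomp_diff_right:
  assumes "is_derivation \<delta>"
  shows "dcomp \<delta> H (F - G) = dcomp \<delta> H F - dcomp \<delta> H G"
proof -
  let ?M = "max (degree F) (degree G)"
  have "degree (F - G) \<le> ?M"
    by (simp add: degree_diff_le)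
  then show ?thesis
    using dcomp_eq_bounded_sum[OF assms, of H "degree H" _ ?M]
    by (simp add: sum_subtractf[symmetric] diff_monom algebra_simps
        funpow_derivation_diff[OF assms])
qed

lemma coeff_dcomp_degree_add:
  "coeff (dcomp \<delta> F G) (degree F + degree G) = lead_coeff F * lead_coeff G"
proof -
  let ?c = "lead_coeff F * lead_coeff G"
  have "coeff (dcomp \<delta> F G) (degree F + degree G) =
     (\<Sum>i\<le>degree F. \<Sum>j\<le>degree G. \<Sum>k\<le>i.
       if i = degree F then if j = degree G then if k = 0 then ?c else 0 else 0 else 0)"
    unfolding dcomp_def coeff_sum by (intro sum.cong refl) auto
  also have "\<dots> = (\<Sum>i\<le>degree F. \<Sum>j\<le>degree G.
       if i = degree F then if j = degree G then ?c else 0 else 0)"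
    by (intro sum.cong refl) (simp add: sum.delta)
  also have "\<dots> = (\<Sum>i\<le>degree F. if i = degree F then ?c else 0)"
    by (intro sum.cong refl) (simp add: sum.delta)
  also have "\<dots> = ?c"
    by (simp add: sum.delta)
  finally show ?thesis .
qed

lemma dcomp_nonzero: "F \<noteq> 0 \<Longrightarrow> G \<noteq> 0 \<Longrightarrow> dcomp \<delta> F G \<noteq> 0"
  using coeff_dcomp_degree_add[of \<delta> F G] by force

lemma dcomp_cancel_right:
  assumes "is_derivation \<delta>" and "H \<noteq> 0" and "dcomp \<delta> F H = dcomp \<delta> G H"
  shows "F = G"
  using assms dcomp_nonzero[of "F - G" H \<delta>] by (auto simp: dcomp_diff_left)

lemma dcomp_cancel_left:
  assumes "is_derivation \<delta>" and "H \<noteq> 0" and "dcomp \<delta> H F = dcomp \<delta> H G"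
  shows "F = G"
  using assms dcomp_nonzero[of H "F - G" \<delta>] by (auto simp: dcomp_diff_right)

lemma Sym_eq_monomD:
  assumes "Sym P = monom c n" and "c \<noteq> 0"
  shows "P \<noteq> 0" and "degree P = n"
  using assms by (auto simp: Sym_def monom_eq_iff')

lemma factors_of_type_degrees:
  assumes "L \<noteq> 0" and "Sym L = S1 * S2"
    and "homogeneous S1 d1" and "homogeneous S2 d2"
    and "Sym F1 = S1" and "Sym F2 = S2"
  shows "degree L = d1 + d2" and "F1 \<noteq> 0" and "degree F1 = d1"
    and "F2 \<noteq> 0" and "degree F2 = d2"
proof -
  obtain c1 c2 where S1: "S1 = monom c1 d1" and S2: "S2 = monom c2 d2"
    using assms(3,4) unfolding homogeneous_def by auto
  have Sym_L: "Sym L = monom (c1 * c2) (d1 + d2)"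
    using assms(2) S1 S2 by (simp add: mult_monom)
  moreover from this have "c1 * c2 \<noteq> 0"
    using assms(1) by (auto simp: Sym_def)
  ultimately show "degree L = d1 + d2"
    by (rule Sym_eq_monomD)
  from \<open>c1 * c2 \<noteq> 0\<close> have "c1 \<noteq> 0" "c2 \<noteq> 0"
    by auto
  with assms(5,6) S1 S2 show "F1 \<noteq> 0" "degree F1 = d1" "F2 \<noteq> 0" "degree F2 = d2"
    using Sym_eq_monomD by metis+
qed

lemma dord_less_nonpos_imp_zero: "dord P < ereal r \<Longrightarrow> r \<le> 0 \<Longrightarrow> P = 0"
  unfolding dord_def by (auto split: if_splits)

lemma extension_order_0_factorization:
  "is_extension \<delta> L S1 S2 t F1 F2 0 G1 G2 \<Longrightarrow> dcomp \<delta> G1 G2 = L"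
  using dord_less_nonpos_imp_zero[of "L - dcomp \<delta> G1 G2" 0]
  unfolding is_extension_def partial_fact_def by auto

lemma extension_left_factor_fixed:
  assumes "is_extension \<delta> L S1 S2 t F1 F2 t' G1 G2"
    and "t \<le> int (degree L) - int (degree F1)"
  shows "G1 = F1"
proof -
  have "dord (F1 - G1) < ereal (real_of_int (t - (int (degree L) - int (degree F1))))"
    using assms(1) unfolding is_extension_def by blast
  then have "F1 - G1 = 0"
    by (rule dord_less_nonpos_imp_zero) (use assms(2) in simp)
  then show ?thesis by simp
qed

lemma extension_right_factor_fixed:
  assumes "is_extension \<delta> L S1 S2 t F1 F2 t' G1 G2"
    and "t \<le> int (degree L) - int (degree F2)"
  shows "G2 = F2"
proof -
  have "dord (F2 - G2) < ereal (real_of_int (t - (int (degree L) - int (degree F2))))"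
    using assms(1) unfolding is_extension_def by blast
  then have "F2 - G2 = 0"
    by (rule dord_less_nonpos_imp_zero) (use assms(2) in simp)
  then show ?thesis by simp
qed

theorem mainTheorem3:
  fixes \<delta> :: "'a::field \<Rightarrow> 'a"
    and L S1 S2 F1 F2 :: "'a poly" and d1 d2 :: nat
  assumes "is_derivation \<delta>"
    and "L \<noteq> 0"
    and "Sym L = S1 * S2"
    and "homogeneous S1 d1" and "homogeneous S2 d2"
    and "partial_fact \<delta> L (int (max d1 d2) - 1) S1 S2 F1 F2"
  shows "\<forall>G1 G2 H1 H2.
           is_extension \<delta> L S1 S2 (int (max d1 d2) - 1) F1 F2 0 G1 G2 \<and>
           is_extension \<delta> L S1 S2 (int (max d1 d2) - 1) F1 F2 0 H1 H2
           \<longrightarrow> G1 = H1 \<and> G2 = H2"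
proof (intro allI impI, elim conjE)
  fix G1 G2 H1 H2
  assume G: "is_extension \<delta> L S1 S2 (int (max d1 d2) - 1) F1 F2 0 G1 G2"
    and H: "is_extension \<delta> L S1 S2 (int (max d1 d2) - 1) F1 F2 0 H1 H2"
  have "Sym F1 = S1" "Sym F2 = S2"
    using assms(6) unfolding partial_fact_def by simp_all
  with assms(2-5) have deg_L: "degree L = d1 + d2"
    and "F1 \<noteq> 0" "degree F1 = d1" "F2 \<noteq> 0" "degree F2 = d2"
    by (rule factors_of_type_degrees)+
  have L: "dcomp \<delta> G1 G2 = L" "dcomp \<delta> H1 H2 = L"
    using G H by (simp_all add: extension_order_0_factorization)
  show "G1 = H1 \<and> G2 = H2"
  proof (cases "d2 \<le> d1")
    case True
    then have "int (max d1 d2) - 1 \<le> int (degree L) - int (degree F2)"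
      using \<open>degree F2 = d2\<close> deg_L by simp
    then have "G2 = F2" "H2 = F2"
      using G H by (simp_all add: extension_right_factor_fixed)
    then show ?thesis
      using L dcomp_cancel_right[OF assms(1) \<open>F2 \<noteq> 0\<close>] by auto
  next
    case False
    then have "int (max d1 d2) - 1 \<le> int (degree L) - int (degree F1)"
      using \<open>degree F1 = d1\<close> deg_L by simp
    then have "G1 = F1" "H1 = F1"
      using G H by (simp_all add: extension_left_factor_fixed)
    then show ?thesis
      using L dcomp_cancel_left[OF assms(1) \<open>F1 \<noteq> 0\<close>] by auto
  qed
qed

end
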